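(* Let $x,y\ge 1$. The maximum number of edges of a connected minimal $(x,y)$ task-dependency graph of order $n$ is $\max(x,y)$ if $n=x+y$ (in which case $\min(x,y)=1$), and $2n-x-y-2$ if $n>x+y$.
   Context: A task-dependency graph is a finite directed acyclic graph (no loops, no multiple edges). A vertex is initial if it has in-degree $0$ and terminal if it has out-degree $0$; an isolated vertex counts as both. An $(x,y)$ task-dependency graph has exactly $x$ initial and exactly $y$ terminal vertices. A minimal $(x,y)$ task-dependency graph is an $(x,y)$ task-dependency graph from which removing any single edge produces a graph that is not an $(x,y)$ task-dependency graph. A connected minimal $(x,y)$ task-dependency graph is a minimal $(x,y)$ task-dependency graph whose underlying undirected graph is connected. The order is the number of vertices. *)

theory Defs
  imports Main
begin

text \<open>A digraph is given by a vertex set V and an edge relation E \<subseteq> V \<times> V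
  (a set of ordered pairs, so no multiple edges); acyclic E excludes loops and cycles.\<close>

definition tdg :: "'a set \<Rightarrow> ('a \<times> 'a) set \<Rightarrow> bool" where
  "tdg V E \<longleftrightarrow> finite V \<and> E \<subseteq> V \<times> V \<and> acyclic E"

definition initials :: "'a set \<Rightarrow> ('a \<times> 'a) set \<Rightarrow> 'a set" where
  "initials V E = {v \<in> V. \<forall>u. (u, v) \<notin> E}"

definition terminals :: "'a set \<Rightarrow> ('a \<times> 'a) set \<Rightarrow> 'a set" where
  "terminals V E = {v \<in> V. \<forall>w. (v, w) \<notin> E}"

definition xy_tdg :: "nat \<Rightarrow> nat \<Rightarrow> 'a set \<Rightarrow> ('a \<times> 'a) set \<Rightarrow> bool" where
  "xy_tdg x y V E \<longleftrightarrow> tdg V E \<and> card (initials V E) = x \<and> card (terminals V E) = y"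

definition minimal_xy_tdg :: "nat \<Rightarrow> nat \<Rightarrow> 'a set \<Rightarrow> ('a \<times> 'a) set \<Rightarrow> bool" where
  "minimal_xy_tdg x y V E \<longleftrightarrow> xy_tdg x y V E \<and> (\<forall>e\<in>E. \<not> xy_tdg x y V (E - {e}))"

definition weakly_connected :: "'a set \<Rightarrow> ('a \<times> 'a) set \<Rightarrow> bool" where
  "weakly_connected V E \<longleftrightarrow> (\<forall>u\<in>V. \<forall>v\<in>V. (u, v) \<in> (E \<union> E\<inverse>)\<^sup>*)"

definition conn_minimal_xy_tdg :: "nat \<Rightarrow> nat \<Rightarrow> 'a set \<Rightarrow> ('a \<times> 'a) set \<Rightarrow> bool" where
  "conn_minimal_xy_tdg x y V E \<longleftrightarrow> minimal_xy_tdg x y V E \<and> weakly_connected V E"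

text \<open>Edge counts of connected minimal (x,y) task-dependency graphs of order n
  (every graph of order n is isomorphic to one on vertex set {0..<n}).\<close>

definition edge_counts :: "nat \<Rightarrow> nat \<Rightarrow> nat \<Rightarrow> nat set" where
  "edge_counts x y n = {card E | E. conn_minimal_xy_tdg x y {0..<n} E}"

end

theory Submission
  imports Defs
begin

text \<open>
  Minimality says exactly that every edge (u, v) is the only out-edge of u or the only in-edge
  of v: otherwise deleting it keeps every initial and terminal vertex. Charging each edge to such
  an endpoint, as the out-side of a non-terminal or the in-side of a non-initial vertex, is
  injective into a set of 2n - x - y slots. For every edge (a, b) one of the slots (a, out),
  (b, in) stays free, and the two edges of a path a \<rightarrow> b \<rightarrow> c leave two distinct slots free.
  If n > x + y, some vertex is neither initial nor terminal and is the middle of such a path,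
  whence |E| \<le> 2n - x - y - 2. If n = x + y and the graph is connected, every edge runs from an
  initial to a terminal vertex; starting from one edge (a, b), connectivity forces the graph (or
  its converse) to be a star centred at a (or b), so min(x, y) = 1 and |E| \<le> x + y - 1.
  Both bounds are attained by a hub 0 pointing to every non-initial vertex except x, where x
  receives an edge from every other non-terminal vertex.
\<close>

definition sole_succ :: "('a \<times> 'a) set \<Rightarrow> 'a \<Rightarrow> 'a \<Rightarrow> bool" where
  "sole_succ E u v \<longleftrightarrow> (\<forall>w. (u, w) \<in> E \<longrightarrow> w = v)"

definition sole_pred :: "('a \<times> 'a) set \<Rightarrow> 'a \<Rightarrow> 'a \<Rightarrow> bool" where
  "sole_pred E u v \<longleftrightarrow> (\<forall>w. (w, v) \<in> E \<longrightarrow> w = u)"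

lemma initials_converse [simp]: "initials V (E\<inverse>) = terminals V E"
  by (auto simp: initials_def terminals_def)

lemma terminals_converse [simp]: "terminals V (E\<inverse>) = initials V E"
  by (auto simp: initials_def terminals_def)

lemma sole_succ_converse [simp]: "sole_succ (E\<inverse>) v u \<longleftrightarrow> sole_pred E u v"
  by (auto simp: sole_succ_def sole_pred_def)

lemma sole_pred_converse [simp]: "sole_pred (E\<inverse>) v u \<longleftrightarrow> sole_succ E u v"
  by (auto simp: sole_succ_def sole_pred_def)

lemma weakly_connected_converse [simp]: "weakly_connected V (E\<inverse>) \<longleftrightarrow> weakly_connected V E"
  by (simp add: weakly_connected_def Un_commute)

lemma terminals_Diff_sole_succ:
  assumes "u \<in> V" "sole_succ E u v"
  shows "terminals V (E - {(u, v)}) = insert u (terminals V E)"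
  using assms by (auto simp: terminals_def sole_succ_def)

lemma card_terminals_Diff_sole_succ:
  assumes "finite V" "u \<in> V" "(u, v) \<in> E" "sole_succ E u v"
  shows "card (terminals V E) < card (terminals V (E - {(u, v)}))"
proof -
  have "u \<notin> terminals V E"
    using assms(3) by (auto simp: terminals_def)
  moreover have "finite (terminals V E)"
    using assms(1) by (simp add: terminals_def)
  ultimately show ?thesis
    using terminals_Diff_sole_succ[OF assms(2,4)] by simp
qed

lemma card_initials_Diff_sole_pred:
  assumes "finite V" "v \<in> V" "(u, v) \<in> E" "sole_pred E u v"
  shows "card (initials V E) < card (initials V (E - {(u, v)}))"
proof -
  have "E\<inverse> - {(v, u)} = (E - {(u, v)})\<inverse>"
    by auto
  then show ?thesis
    using card_terminals_Diff_sole_succ[of V v u "E\<inverse>"] assms by simp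
qed

lemma minimal_xy_tdg_iff:
  "minimal_xy_tdg x y V E \<longleftrightarrow>
     xy_tdg x y V E \<and> (\<forall>(u, v) \<in> E. sole_succ E u v \<or> sole_pred E u v)"
proof
  assume min: "minimal_xy_tdg x y V E"
  then have xy: "xy_tdg x y V E"
    by (simp add: minimal_xy_tdg_def)
  moreover have "sole_succ E u v \<or> sole_pred E u v" if uv: "(u, v) \<in> E" for u v
  proof (rule ccontr)
    assume "\<not> (sole_succ E u v \<or> sole_pred E u v)"
    with uv have "initials V (E - {(u, v)}) = initials V E"
      and "terminals V (E - {(u, v)}) = terminals V E"
      by (auto simp: initials_def terminals_def sole_succ_def sole_pred_def)
    moreover have "tdg V (E - {(u, v)})"
      using xy by (auto simp: xy_tdg_def tdg_def intro: acyclic_subset)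
    ultimately have "xy_tdg x y V (E - {(u, v)})"
      using xy by (simp add: xy_tdg_def)
    with min uv show False
      by (auto simp: minimal_xy_tdg_def)
  qed
  ultimately show "xy_tdg x y V E \<and> (\<forall>(u, v) \<in> E. sole_succ E u v \<or> sole_pred E u v)"
    by auto
next
  assume "xy_tdg x y V E \<and> (\<forall>(u, v) \<in> E. sole_succ E u v \<or> sole_pred E u v)"
  then have xy: "xy_tdg x y V E" and sole: "\<forall>(u, v) \<in> E. sole_succ E u v \<or> sole_pred E u v"
    by auto
  have fin: "finite V" and EV: "E \<subseteq> V \<times> V"
    using xy by (auto simp: xy_tdg_def tdg_def)
  have "\<not> xy_tdg x y V (E - {(u, v)})" if uv: "(u, v) \<in> E" for u v
  proof -
    have "u \<in> V" "v \<in> V"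
      using uv EV by auto
    consider "sole_succ E u v" | "sole_pred E u v"
      using sole uv by auto
    then show ?thesis
    proof cases
      case 1
      with card_terminals_Diff_sole_succ[OF fin \<open>u \<in> V\<close> uv] xy show ?thesis
        by (simp add: xy_tdg_def)
    next
      case 2
      with card_initials_Diff_sole_pred[OF fin \<open>v \<in> V\<close> uv] xy show ?thesis
        by (simp add: xy_tdg_def)
    qed
  qed
  with xy show "minimal_xy_tdg x y V E"
    by (auto simp: minimal_xy_tdg_def)
qed

lemma minimal_xy_tdg_sole:
  "minimal_xy_tdg x y V E \<Longrightarrow> (u, v) \<in> E \<Longrightarrow> sole_succ E u v \<or> sole_pred E u v"
  by (auto simp: minimal_xy_tdg_iff)

text \<open>True marks the out-side of a vertex, False its in-side.\<close>

fun edge_slot :: "('a \<times> 'a) set \<Rightarrow> 'a \<times> 'a \<Rightarrow> 'a \<times> bool" where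
  "edge_slot E (u, v) = (if sole_succ E u v then (u, True) else (v, False))"

definition slots :: "'a set \<Rightarrow> ('a \<times> 'a) set \<Rightarrow> ('a \<times> bool) set" where
  "slots V E = (V - terminals V E) \<times> {True} \<union> (V - initials V E) \<times> {False}"

lemma card_slots:
  assumes "finite V"
  shows "card (slots V E) + card (initials V E) + card (terminals V E) = 2 * card V"
proof -
  have "card (V - terminals V E) + card (terminals V E) = card V"
    "card (V - initials V E) + card (initials V E) = card V"
    using assms by (simp_all add: card_Diff_subset card_mono initials_def terminals_def)
  moreover have "card (slots V E) = card (V - terminals V E) + card (V - initials V E)"
    unfolding slots_def using assms
    by (subst card_Un_disjoint) (auto simp: card_cartesian_product)
  ultimately show ?thesis
    by simp
qed

lemma edge_slot_in_slots: "E \<subseteq> V \<times> V \<Longrightarrow> edge_slot E ` E \<subseteq> slots V E"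
  by (auto simp: slots_def initials_def terminals_def split: if_splits)

lemma inj_on_edge_slot:
  assumes sole: "\<And>u v. (u, v) \<in> E \<Longrightarrow> sole_succ E u v \<or> sole_pred E u v"
  shows "inj_on (edge_slot E) E"
proof -
  have "(a, b) = (c, d)"
    if ab: "(a, b) \<in> E" and cd: "(c, d) \<in> E" and eq: "edge_slot E (a, b) = edge_slot E (c, d)"
    for a b c d
  proof (cases "sole_succ E a b")
    case True
    with eq have "a = c"
      by (auto split: if_splits)
    with True cd show ?thesis
      by (auto simp: sole_succ_def)
  next
    case False
    with eq have "b = d" "\<not> sole_succ E c d"
      by (auto split: if_splits)
    then have "sole_pred E a b"
      using sole[OF ab] False by blast
    with cd \<open>b = d\<close> show ?thesis
      by (auto simp: sole_pred_def)
  qed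
  then show ?thesis
    by (intro inj_onI) auto
qed

lemma edge_slot_unused:
  assumes sole: "\<And>u v. (u, v) \<in> E \<Longrightarrow> sole_succ E u v \<or> sole_pred E u v"
    and ab: "(a, b) \<in> E"
  shows "(a, True) \<notin> edge_slot E ` E \<or> (b, False) \<notin> edge_slot E ` E"
proof (rule ccontr)
  assume "\<not> ?thesis"
  then obtain v u where
    av: "(a, v) \<in> E" "sole_succ E a v" and
    ub: "(u, b) \<in> E" "\<not> sole_succ E u b"
    by (auto split: if_splits)
  have "sole_pred E u b"
    using sole[OF ub(1)] ub(2) by blast
  \<comment> \<open>both slots would then be charged by the edge (a, b) itself\<close>
  then show False
    using av ab ub by (auto simp: sole_succ_def sole_pred_def)
qed

lemma card_edges_plus_unused_slots_le:
  assumes min: "minimal_xy_tdg x y V E"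
    and M: "M \<subseteq> slots V E" "M \<inter> edge_slot E ` E = {}"
  shows "card E + card M + x + y \<le> 2 * card V"
proof -
  have fin: "finite V" and EV: "E \<subseteq> V \<times> V"
    and x: "card (initials V E) = x" and y: "card (terminals V E) = y"
    using min by (auto simp: minimal_xy_tdg_def xy_tdg_def tdg_def)
  have fin_slots: "finite (slots V E)"
    using fin by (simp add: slots_def)
  have "card E = card (edge_slot E ` E)"
    using inj_on_edge_slot[OF minimal_xy_tdg_sole[OF min]] by (simp add: card_image)
  also have "\<dots> + card M = card (edge_slot E ` E \<union> M)"
    using M fin_slots edge_slot_in_slots[OF EV]
    by (subst card_Un_disjoint) (auto intro: finite_subset)
  also have "\<dots> \<le> card (slots V E)"
    using M fin_slots edge_slot_in_slots[OF EV] by (intro card_mono) auto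
  finally show ?thesis
    using card_slots[OF fin, of E] x y by simp
qed

lemma minimal_xy_tdg_edge_bound:
  assumes min: "minimal_xy_tdg x y V E" and ab: "(a, b) \<in> E"
  shows "card E + 1 + x + y \<le> 2 * card V"
proof -
  have EV: "E \<subseteq> V \<times> V"
    using min by (simp add: minimal_xy_tdg_def xy_tdg_def tdg_def)
  obtain s where "s \<in> {(a, True), (b, False)}" "s \<notin> edge_slot E ` E"
    using edge_slot_unused[OF minimal_xy_tdg_sole[OF min] ab] by blast
  moreover have "{(a, True), (b, False)} \<subseteq> slots V E"
    using ab EV by (auto simp: slots_def initials_def terminals_def)
  ultimately show ?thesis
    using card_edges_plus_unused_slots_le[OF min, of "{s}"] by auto
qed

lemma minimal_xy_tdg_path_bound:
  assumes min: "minimal_xy_tdg x y V E" and ab: "(a, b) \<in> E" and bc: "(b, c) \<in> E"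
  shows "card E + 2 + x + y \<le> 2 * card V"
proof -
  have EV: "E \<subseteq> V \<times> V" and "acyclic E"
    using min by (auto simp: minimal_xy_tdg_def xy_tdg_def tdg_def)
  then have "a \<noteq> b" "b \<noteq> c"
    using ab bc by (auto simp: acyclic_def)
  obtain s where s: "s \<in> {(a, True), (b, False)}" "s \<notin> edge_slot E ` E"
    using edge_slot_unused[OF minimal_xy_tdg_sole[OF min] ab] by blast
  obtain t where t: "t \<in> {(b, True), (c, False)}" "t \<notin> edge_slot E ` E"
    using edge_slot_unused[OF minimal_xy_tdg_sole[OF min] bc] by blast
  have "s \<noteq> t"
    using s t \<open>a \<noteq> b\<close> \<open>b \<noteq> c\<close> by auto
  moreover have "{(a, True), (b, False), (b, True), (c, False)} \<subseteq> slots V E"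
    using ab bc EV by (auto simp: slots_def initials_def terminals_def)
  ultimately show ?thesis
    using card_edges_plus_unused_slots_le[OF min, of "{s, t}"] s t by auto
qed

lemma minimal_xy_tdg_card_edges_le:
  assumes min: "minimal_xy_tdg x y V E" and order: "x + y < card V"
  shows "card E + 2 + x + y \<le> 2 * card V"
proof -
  have "card (initials V E \<union> terminals V E) \<le> x + y"
    using min card_Un_le[of "initials V E" "terminals V E"]
    by (simp add: minimal_xy_tdg_def xy_tdg_def)
  then have "initials V E \<union> terminals V E \<noteq> V"
    using order by auto
  then obtain b where "b \<in> V" "b \<notin> initials V E" "b \<notin> terminals V E"
    by (auto simp: initials_def terminals_def)
  then obtain a c where "(a, b) \<in> E" "(b, c) \<in> E"
    by (auto simp: initials_def terminals_def)
  then show ?thesis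
    using minimal_xy_tdg_path_bound[OF min] by blast
qed

lemma weakly_connected_closed_subset:
  assumes wc: "weakly_connected V E" and "a \<in> V" "a \<in> C"
    and closed: "\<And>z z'. z \<in> C \<Longrightarrow> (z, z') \<in> E \<union> E\<inverse> \<Longrightarrow> z' \<in> C"
  shows "V \<subseteq> C"
proof
  fix v assume "v \<in> V"
  with wc \<open>a \<in> V\<close> have "(a, v) \<in> (E \<union> E\<inverse>)\<^sup>*"
    by (simp add: weakly_connected_def)
  then show "v \<in> C"
    by (induction rule: rtrancl_induct) (use \<open>a \<in> C\<close> closed in auto)
qed

lemma initials_Int_terminals_weakly_connected:
  assumes wc: "weakly_connected V E" and "2 \<le> card V"
  shows "initials V E \<inter> terminals V E = {}"
proof (rule ccontr)
  assume "initials V E \<inter> terminals V E \<noteq> {}"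
  then obtain v where v: "v \<in> initials V E" "v \<in> terminals V E"
    by blast
  then have "V \<subseteq> {v}"
    using wc by (intro weakly_connected_closed_subset) (auto simp: initials_def terminals_def)
  then have "card V \<le> 1"
    using card_mono[of "{v}" V] by simp
  with \<open>2 \<le> card V\<close> show False
    by simp
qed

lemma initials_subset_centre:
  assumes wc: "weakly_connected V E" and a: "a \<in> initials V E"
    and succ: "\<And>w. (a, w) \<in> E \<Longrightarrow> w \<in> terminals V E \<and> sole_pred E a w"
  shows "initials V E \<subseteq> {a}"
proof -
  have "V \<subseteq> insert a (E `` {a})"
  proof (rule weakly_connected_closed_subset[OF wc])
    show "a \<in> V" "a \<in> insert a (E `` {a})"
      using a by (auto simp: initials_def)
    fix z z' assume "z \<in> insert a (E `` {a})" "(z, z') \<in> E \<union> E\<inverse>"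
    then show "z' \<in> insert a (E `` {a})"
      using a succ by (fastforce simp: initials_def terminals_def sole_pred_def)
  qed
  then show ?thesis
    by (auto simp: initials_def)
qed

lemma conn_minimal_xy_tdg_order_eq:
  assumes conn: "conn_minimal_xy_tdg x y V E" and order: "card V = x + y"
    and "1 \<le> x" "1 \<le> y"
  shows "min x y = 1" and "card E + 1 \<le> x + y"
proof -
  have min: "minimal_xy_tdg x y V E" and wc: "weakly_connected V E"
    using conn by (auto simp: conn_minimal_xy_tdg_def)
  have fin: "finite V" and EV: "E \<subseteq> V \<times> V"
    and x: "card (initials V E) = x" and y: "card (terminals V E) = y"
    using min by (auto simp: minimal_xy_tdg_def xy_tdg_def tdg_def)
  have "initials V E \<inter> terminals V E = {}"
    using initials_Int_terminals_weakly_connected[OF wc] order assms(3,4) by simp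
  then have "card (initials V E \<union> terminals V E) = card V"
    using fin x y order by (subst card_Un_disjoint) (auto simp: initials_def terminals_def)
  then have "initials V E \<union> terminals V E = V"
    using fin by (intro card_subset_eq) (auto simp: initials_def terminals_def)
  then have edge: "u \<in> initials V E \<and> v \<in> terminals V E" if "(u, v) \<in> E" for u v
    using that EV by (auto simp: initials_def terminals_def)
  obtain a where "a \<in> initials V E"
    using x \<open>1 \<le> x\<close> by fastforce
  moreover have "a \<notin> terminals V E"
    using \<open>initials V E \<inter> terminals V E = {}\<close> calculation by blast
  ultimately obtain b where ab: "(a, b) \<in> E"
    by (auto simp: initials_def terminals_def)
  show "card E + 1 \<le> x + y"
    using minimal_xy_tdg_edge_bound[OF min ab] order by simp
  show "min x y = 1"
  proof (cases "sole_succ E a b")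
    case True
    have "sole_succ E w b" if "(w, b) \<in> E" for w
      using minimal_xy_tdg_sole[OF min that] True ab by (auto simp: sole_pred_def)
    then have "initials V (E\<inverse>) \<subseteq> {b}"
      using edge ab wc by (intro initials_subset_centre) auto
    then have "y \<le> 1"
      using y card_mono[of "{b}" "terminals V E"] by simp
    then show ?thesis
      using \<open>1 \<le> x\<close> \<open>1 \<le> y\<close> by simp
  next
    case False
    have "sole_pred E a w" if "(a, w) \<in> E" for w
      using minimal_xy_tdg_sole[OF min that] False ab by (auto simp: sole_succ_def)
    then have "initials V E \<subseteq> {a}"
      using edge ab wc by (intro initials_subset_centre) auto
    then have "x \<le> 1"
      using x card_mono[of "{a}" "initials V E"] by simp
    then show ?thesis
      using \<open>1 \<le> x\<close> \<open>1 \<le> y\<close> by simp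
  qed
qed

lemma acyclic_if_rank_increasing:
  fixes f :: "'a \<Rightarrow> nat"
  assumes "\<And>a b. (a, b) \<in> E \<Longrightarrow> f a < f b"
  shows "acyclic E"
proof -
  have "E \<subseteq> inv_image less_than f"
    using assms by auto
  then show ?thesis
    by (meson acyclic_subset wf_acyclic wf_inv_image wf_less_than)
qed

lemma weakly_connectedI_root:
  assumes "\<And>v. v \<in> V \<Longrightarrow> (r, v) \<in> (E \<union> E\<inverse>)\<^sup>*"
  shows "weakly_connected V E"
  unfolding weakly_connected_def
proof (intro ballI)
  fix u v assume "u \<in> V" "v \<in> V"
  have "(u, r) \<in> ((E \<union> E\<inverse>)\<inverse>)\<^sup>*"
    using assms[OF \<open>u \<in> V\<close>] by (simp add: rtrancl_converseI)
  also have "(E \<union> E\<inverse>)\<inverse> = E \<union> E\<inverse>"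
    by auto
  finally show "(u, v) \<in> (E \<union> E\<inverse>)\<^sup>*"
    using assms[OF \<open>v \<in> V\<close>] by (rule rtrancl_trans)
qed

text \<open>Vertices 0..<x are initial, x..<x + y terminal and x + y..<n internal.\<close>

definition extremal_edges :: "nat \<Rightarrow> nat \<Rightarrow> nat \<Rightarrow> (nat \<times> nat) set" where
  "extremal_edges x y n =
     Pair 0 ` {x<..<n} \<union> (\<lambda>u. (u, x)) ` ({0<..<x} \<union> {x + y..<n}) \<union>
     (if n = x + y then {(0, x)} else {})"

lemma mem_extremal_edges:
  "(a, b) \<in> extremal_edges x y n \<longleftrightarrow>
     a = 0 \<and> x < b \<and> b < n \<or>
     b = x \<and> (0 < a \<and> a < x \<or> x + y \<le> a \<and> a < n) \<or>
     n = x + y \<and> a = 0 \<and> b = x"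
  by (auto simp: extremal_edges_def)

locale extremal_tdg =
  fixes x y n :: nat
  assumes x_pos: "1 \<le> x" and y_pos: "1 \<le> y" and order: "x + y \<le> n"
    and order_eq: "n = x + y \<Longrightarrow> min x y = 1"
begin

abbreviation E :: "(nat \<times> nat) set" where
  "E \<equiv> extremal_edges x y n"

lemma edges_subset: "E \<subseteq> {0..<n} \<times> {0..<n}"
  using x_pos y_pos order by (auto simp: mem_extremal_edges)

lemma acyclic_edges: "acyclic E"
  by (rule acyclic_if_rank_increasing[where f = "\<lambda>v. if v = 0 then 0 else if v = x then 2 else 1"])
    (use x_pos y_pos in \<open>auto simp: mem_extremal_edges\<close>)

lemma has_pred_iff:
  assumes "v < n"
  shows "(\<exists>a. (a, v) \<in> E) \<longleftrightarrow> x \<le> v"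
proof
  assume "\<exists>a. (a, v) \<in> E"
  then show "x \<le> v"
    using x_pos by (auto simp: mem_extremal_edges)
next
  assume "x \<le> v"
  then have "(if v = x \<and> n \<noteq> x + y then x + y else 0, v) \<in> E"
    using assms x_pos y_pos order by (auto simp: mem_extremal_edges)
  then show "\<exists>a. (a, v) \<in> E" ..
qed

lemma has_succ_iff:
  assumes "v < n"
  shows "(\<exists>b. (v, b) \<in> E) \<longleftrightarrow> v < x \<or> x + y \<le> v"
proof
  assume "\<exists>b. (v, b) \<in> E"
  then show "v < x \<or> x + y \<le> v"
    using x_pos by (auto simp: mem_extremal_edges)
next
  assume "v < x \<or> x + y \<le> v"
  then have "(v, if v = 0 \<and> n \<noteq> x + y then x + y else x) \<in> E"
    using assms x_pos y_pos order by (auto simp: mem_extremal_edges)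
  then show "\<exists>b. (v, b) \<in> E" ..
qed

lemma initials_edges: "initials {0..<n} E = {0..<x}"
proof (rule set_eqI)
  fix v
  show "v \<in> initials {0..<n} E \<longleftrightarrow> v \<in> {0..<x}"
    using has_pred_iff[of v] order by (cases "v < n") (auto simp: initials_def)
qed

lemma terminals_edges: "terminals {0..<n} E = {x..<x + y}"
proof (rule set_eqI)
  fix v
  show "v \<in> terminals {0..<n} E \<longleftrightarrow> v \<in> {x..<x + y}"
    using has_succ_iff[of v] order by (cases "v < n") (auto simp: terminals_def)
qed

lemma sole_edges:
  assumes uv: "(u, v) \<in> E"
  shows "sole_succ E u v \<or> sole_pred E u v"
proof -
  consider "u = 0" "x < v" | "v = x" "u \<noteq> 0" | "u = 0" "v = x" "n = x + y"
    using uv x_pos y_pos by (auto simp: mem_extremal_edges)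
  then show ?thesis
  proof cases
    case 1
    then show ?thesis
      by (auto simp: sole_pred_def mem_extremal_edges)
  next
    case 2
    then show ?thesis
      by (auto simp: sole_succ_def mem_extremal_edges)
  next
    case 3
    then have "x = 1 \<or> y = 1"
      using order_eq x_pos y_pos by linarith
    then show ?thesis
      using 3 by (auto simp: sole_succ_def sole_pred_def mem_extremal_edges)
  qed
qed

lemma weakly_connected_edges: "weakly_connected {0..<n} E"
proof (rule weakly_connectedI_root)
  let ?R = "E \<union> E\<inverse>"
  have hub_x: "(0, x) \<in> ?R\<^sup>*"
  proof (cases "n = x + y")
    case True
    then have "(0, x) \<in> ?R"
      by (simp add: mem_extremal_edges)
    then show ?thesis ..
  next
    case False
    then have "(0, x + y) \<in> ?R" "(x + y, x) \<in> ?R"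
      using order y_pos by (simp_all add: mem_extremal_edges)
    then show ?thesis
      by (meson rtrancl.rtrancl_into_rtrancl rtrancl.rtrancl_refl)
  qed
  fix v assume "v \<in> {0..<n}"
  then consider "v = 0" | "v = x" | "x < v" "v < n" | "0 < v" "v < x"
    by fastforce
  then show "(0, v) \<in> ?R\<^sup>*"
  proof cases
    case 3
    then have "(0, v) \<in> ?R"
      by (simp add: mem_extremal_edges)
    then show ?thesis ..
  next
    case 4
    then have "(x, v) \<in> ?R"
      by (simp add: mem_extremal_edges)
    with hub_x show ?thesis ..
  qed (use hub_x in simp_all)
qed

lemma card_edges: "card E = (if n = x + y then x + y - 1 else 2 * n - x - y - 2)"
proof -
  let ?A = "Pair (0 :: nat) ` {x<..<n}"
  let ?B = "(\<lambda>u. (u, x)) ` ({0<..<x} \<union> {x + y..<n})"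
  let ?C = "if n = x + y then {(0 :: nat, x)} else {}"
  have "card ?A = n - x - 1"
    by (subst card_image) (auto intro: inj_onI)
  moreover have "card ({0<..<x} \<union> {x + y..<n}) = (x - 1) + (n - x - y)"
    by (subst card_Un_disjoint) auto
  then have "card ?B = (x - 1) + (n - x - y)"
    by (subst card_image) (auto intro: inj_onI)
  moreover have "card (?A \<union> ?B) = card ?A + card ?B"
    by (intro card_Un_disjoint) auto
  moreover have "card E = card (?A \<union> ?B) + card ?C"
    unfolding extremal_edges_def using x_pos by (intro card_Un_disjoint) auto
  ultimately show ?thesis
    using x_pos y_pos order by auto
qed

lemma conn_minimal_edges: "conn_minimal_xy_tdg x y {0..<n} E"
  using edges_subset acyclic_edges sole_edges weakly_connected_edges
  by (auto simp: conn_minimal_xy_tdg_def minimal_xy_tdg_iff xy_tdg_def tdg_def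
      initials_edges terminals_edges)

end

lemma extremal_card_in_edge_counts:
  assumes "1 \<le> x" "1 \<le> y" "x + y \<le> n" "n = x + y \<Longrightarrow> min x y = 1"
  shows "(if n = x + y then x + y - 1 else 2 * n - x - y - 2) \<in> edge_counts x y n"
proof -
  interpret extremal_tdg x y n
    using assms by unfold_locales
  show ?thesis
    unfolding edge_counts_def mem_Collect_eq
    by (intro exI conjI) (rule card_edges[symmetric], rule conn_minimal_edges)
qed

lemma edge_counts_order_gt:
  assumes "k \<in> edge_counts x y n" "x + y < n"
  shows "k + 2 + x + y \<le> 2 * n"
  using assms minimal_xy_tdg_card_edges_le[of x y "{0..<n}"]
  by (auto simp: edge_counts_def conn_minimal_xy_tdg_def)

lemma edge_counts_order_eq:
  assumes "k \<in> edge_counts x y (x + y)" "1 \<le> x" "1 \<le> y"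
  shows "min x y = 1" "k + 1 \<le> x + y"
  using assms conn_minimal_xy_tdg_order_eq[of x y "{0..<x + y}"]
  by (auto simp: edge_counts_def)

lemma Max_nat_eqI: "(m :: nat) \<in> A \<Longrightarrow> (\<And>k. k \<in> A \<Longrightarrow> k \<le> m) \<Longrightarrow> Max A = m"
  by (meson Max_eqI finite_nat_set_iff_bounded_le)

theorem mainTheorem2:
  fixes x y n :: nat
  assumes "x \<ge> 1" and "y \<ge> 1"
  shows "(n = x + y \<longrightarrow>
            (edge_counts x y n \<noteq> {} \<longrightarrow> min x y = 1) \<and>
            (min x y = 1 \<longrightarrow> edge_counts x y n \<noteq> {} \<and> Max (edge_counts x y n) = max x y))
       \<and> (n > x + y \<longrightarrow>
            edge_counts x y n \<noteq> {} \<and> Max (edge_counts x y n) = 2 * n - x - y - 2)"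
proof (intro conjI impI)
  assume "n = x + y" "edge_counts x y n \<noteq> {}"
  then show "min x y = 1"
    using edge_counts_order_eq assms by blast
next
  assume n: "n = x + y" and min: "min x y = 1"
  then have "x + y - 1 = max x y"
    by linarith
  then have mem: "max x y \<in> edge_counts x y n"
    using extremal_card_in_edge_counts[of x y n] assms n min by simp
  then show "edge_counts x y n \<noteq> {}"
    by blast
  show "Max (edge_counts x y n) = max x y"
    using mem edge_counts_order_eq(2) assms n min by (intro Max_nat_eqI) fastforce+
next
  assume n: "x + y < n"
  then have mem: "2 * n - x - y - 2 \<in> edge_counts x y n"
    using extremal_card_in_edge_counts[of x y n] assms by simp
  then show "edge_counts x y n \<noteq> {}"
    by blast
  show "Max (edge_counts x y n) = 2 * n - x - y - 2"
    using mem edge_counts_order_gt n by (intro Max_nat_eqI) fastforce+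
qed

end
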